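(* Let $\kappa\in(1,2)$ and $\delta\in(0,1]$. There exist a function $\Phi$ on $\bar C_1$, continuous on $\bar C_1$ and having locally continuous derivatives $\partial_t\Phi$, $D\Phi$, $D^2\Phi$ in $C_1$, and a constant $N=N(\kappa,\delta)$ such that $$\partial_t\Phi+a^{ij}D_{ij}\Phi\le-\big[(1-|x|)\wedge\sqrt{1-t}\big]^{\kappa-2}$$ in $C_1$ for every $(a^{ij})\in\mathbb{S}_\delta$, and $0\le\Phi(t,x)\le N(1-|x|)$ in $C_1$.
   Context: $B_1$ is the open unit ball in $\mathbb{R}^d$, $C_1=[0,1)\times B_1$. $\mathbb{S}$ is the set of symmetric $d\times d$ real matrices and $\mathbb{S}_\delta=\{a\in\mathbb{S}:\delta|\lambda|^2\le a^{ij}\lambda^i\lambda^j\le\delta^{-1}|\lambda|^2\ \forall\lambda\}$; summation over repeated indices; $D_{ij}$ are second derivatives in $x$. *)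

theory Defs
  imports "HOL-Analysis.Analysis"
begin

text \<open>The space R^d is real^'n for a finite index type 'n (d = CARD('n)).
  Points of the cylinder are pairs (t, x).\<close>

definition C1 :: "(real \<times> (real^'n)) set" where
  "C1 = {(t, x). 0 \<le> t \<and> t < 1 \<and> norm x < 1}"

definition C1bar :: "(real \<times> (real^'n)) set" where
  "C1bar = {(t, x). 0 \<le> t \<and> t \<le> 1 \<and> norm x \<le> 1}"

definition Sdelta :: "real \<Rightarrow> (real^'n^'n) set" where
  "Sdelta \<delta> = {a. transpose a = a \<and>
     (\<forall>v::real^'n. \<delta> * (norm v)\<^sup>2 \<le> v \<bullet> (a *v v) \<and>
                      v \<bullet> (a *v v) \<le> (1 / \<delta>) * (norm v)\<^sup>2)}"

text \<open>The time derivative is taken within [0,1) (one-sided at t = 0, as C1 contains t = 0).\<close>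
definition C12_derivs ::
  "(real \<Rightarrow> real^'n \<Rightarrow> real) \<Rightarrow> (real \<Rightarrow> real^'n \<Rightarrow> real) \<Rightarrow>
   (real \<Rightarrow> real^'n \<Rightarrow> real^'n) \<Rightarrow> (real \<Rightarrow> real^'n \<Rightarrow> real^'n^'n) \<Rightarrow> bool" where
  "C12_derivs \<Phi> \<Phi>t D\<Phi> D2\<Phi> \<longleftrightarrow>
     (\<forall>(t, x)\<in>C1. ((\<lambda>s. \<Phi> s x) has_real_derivative \<Phi>t t x) (at t within {0..<1})) \<and>
     (\<forall>(t, x)\<in>C1. ((\<lambda>y. \<Phi> t y) has_derivative (\<lambda>h. D\<Phi> t x \<bullet> h)) (at x)) \<and>
     (\<forall>(t, x)\<in>C1. ((\<lambda>y. D\<Phi> t y) has_derivative (\<lambda>h. D2\<Phi> t x *v h)) (at x)) \<and>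
     continuous_on C1 (\<lambda>(t, x). \<Phi>t t x) \<and>
     continuous_on C1 (\<lambda>(t, x). D\<Phi> t x) \<and>
     continuous_on C1 (\<lambda>(t, x). D2\<Phi> t x)"

end

theory Submission
  imports Defs
begin

text \<open>The barrier is radial: \<open>\<Phi>(t, x) = K F(w, s)\<close> with \<open>w = 1 - |x|\<^sup>2\<close>, \<open>s = 1 - t\<close>,
  \<open>F(w, s) = 2Aw + s\<^bsup>\<kappa>/2\<^esup> - (w\<^sup>2 + s)\<^bsup>\<kappa>/2\<^esup> - w\<^sup>\<kappa>\<close> and \<open>A = \<kappa> + 1\<close>, so that
  \<open>\<partial>\<^sub>t\<Phi> + a\<^sup>i\<^sup>jD\<^sub>i\<^sub>j\<Phi> = K(-F\<^sub>s - 2F\<^sub>w tr a + 4F\<^sub>w\<^sub>w (ax, x))\<close>. Here \<open>F\<^sub>w \<ge> 2\<close>,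
  \<open>F\<^sub>s \<ge> 0\<close> and \<open>F\<^sub>w\<^sub>w \<le> 0\<close>, so ellipticity bounds the operator by
  \<open>K(-F\<^sub>s - 4\<delta> + 4\<delta>|x|\<^sup>2F\<^sub>w\<^sub>w)\<close>. The term \<open>-F\<^sub>w\<^sub>w\<close> is of order \<open>w\<^bsup>\<kappa>-2\<^esup>\<close>, and of order
  \<open>s\<^bsup>\<kappa>/2-1\<^esup>\<close> when \<open>s \<ge> w\<^sup>2\<close>; when \<open>s \<le> w\<^sup>2\<close> that order is supplied by \<open>F\<^sub>s\<close>
  instead, and where \<open>|x|\<^sup>2 < 1/2\<close> both powers are bounded and absorbed by \<open>-4\<delta>\<close>. Hence the
  operator is at most \<open>-cK(w\<^bsup>\<kappa>-2\<^esup> + s\<^bsup>\<kappa>/2-1\<^esup>)\<close>, which for \<open>K = 2/c\<close> dominates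
  \<open>((1 - |x|) \<and> \<surd>(1 - t))\<^bsup>\<kappa>-2\<^esup>\<close>. Subadditivity of \<open>z \<mapsto> z\<^bsup>\<kappa>/2\<^esup>\<close> gives
  \<open>0 \<le> F \<le> 2Aw\<close>, whence the linear bound.\<close>

definition profile :: "real \<Rightarrow> real \<Rightarrow> real \<Rightarrow> real \<Rightarrow> real" where
  "profile k A w s = 2*A*w + s powr (k/2) - (w\<^sup>2 + s) powr (k/2) - w powr k"

definition profile_w :: "real \<Rightarrow> real \<Rightarrow> real \<Rightarrow> real \<Rightarrow> real" where
  "profile_w k A w s = 2*A - k*w*(w\<^sup>2 + s) powr (k/2 - 1) - k * w powr (k - 1)"

definition profile_ww :: "real \<Rightarrow> real \<Rightarrow> real \<Rightarrow> real" where
  "profile_ww k w s =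
     - k*(w\<^sup>2 + s) powr (k/2 - 2) * ((k - 1)*w\<^sup>2 + s) - k*(k - 1)*w powr (k - 2)"

definition profile_t :: "real \<Rightarrow> real \<Rightarrow> real \<Rightarrow> real" where
  "profile_t k w s = (k/2) * ((w\<^sup>2 + s) powr (k/2 - 1) - s powr (k/2 - 1))"

lemma has_real_derivative_profile_w:
  assumes "0 < w" "0 \<le> s"
  shows "((\<lambda>w. profile k A w s) has_real_derivative profile_w k A w s) (at w)"
proof -
  have "0 < w\<^sup>2 + s" using assms by (simp add: add_pos_nonneg)
  then have "((\<lambda>w. profile k A w s) has_real_derivative
      2*A + 0 - (k/2) * (w\<^sup>2 + s) powr (k/2 - 1) * (2*w) - k * w powr (k - 1)) (at w)"
    unfolding profile_def using assms
    by (intro derivative_eq_intros DERIV_fun_powr[where r="k/2", simplified] refl)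
      (auto intro!: derivative_eq_intros)
  then show ?thesis unfolding profile_w_def by (simp add: algebra_simps)
qed

lemma has_real_derivative_profile_ww:
  assumes "0 < w" "0 \<le> s"
  shows "((\<lambda>w. profile_w k A w s) has_real_derivative profile_ww k w s) (at w)"
proof -
  have P: "0 < w\<^sup>2 + s" using assms by (simp add: add_pos_nonneg)
  have "((\<lambda>w. profile_w k A w s) has_real_derivative
      0 - (k * 1 * (w\<^sup>2 + s) powr (k/2 - 1)
           + k*w*((k/2 - 1) * (w\<^sup>2 + s) powr (k/2 - 1 - 1) * (2*w)))
        - k * ((k - 1) * w powr (k - 1 - 1))) (at w)"
    unfolding profile_w_def using P assms by (auto intro!: derivative_eq_intros)
  moreover have "(w\<^sup>2 + s) powr (k/2 - 1) = (w\<^sup>2 + s) powr (k/2 - 2) * (w\<^sup>2 + s)"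
    using powr_add[of "w\<^sup>2 + s" "k/2 - 2" 1] P by simp
  ultimately show ?thesis unfolding profile_ww_def
    by (simp add: algebra_simps power2_eq_square)
qed

lemma has_real_derivative_profile_t:
  assumes "0 < w" "t < 1"
  shows "((\<lambda>t. profile k A w (1 - t)) has_real_derivative profile_t k w (1 - t)) (at t)"
proof -
  have "0 < w\<^sup>2 + (1 - t)" using assms by (simp add: add_pos_pos)
  then have "((\<lambda>t. profile k A w (1 - t)) has_real_derivative
      0 + (k/2) * (1 - t) powr (k/2 - 1) * (0 - 1)
        - (k/2) * (w\<^sup>2 + (1 - t)) powr (k/2 - 1) * (0 + (0 - 1)) - 0) (at t)"
    unfolding profile_def using assms by (auto intro!: derivative_eq_intros)
  then show ?thesis unfolding profile_t_def by (simp add: algebra_simps)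
qed

lemma continuous_on_profile:
  assumes "continuous_on S f" "continuous_on S g" "\<forall>p\<in>S. 0 \<le> f p \<and> 0 \<le> g p" "0 < k"
  shows "continuous_on S (\<lambda>p. profile k A (f p) (g p))"
  unfolding profile_def using assms
  by (intro continuous_intros continuous_on_powr') auto

lemma continuous_on_profile_w:
  assumes "continuous_on S f" "continuous_on S g" "\<forall>p\<in>S. 0 < f p \<and> 0 < g p"
  shows "continuous_on S (\<lambda>p. profile_w k A (f p) (g p))"
proof -
  have "\<forall>p\<in>S. 0 < (f p)\<^sup>2 + g p" using assms(3) by (simp add: add_nonneg_pos)
  then show ?thesis unfolding profile_w_def using assms by (intro continuous_intros) auto
qed

lemma continuous_on_profile_ww:
  assumes "continuous_on S f" "continuous_on S g" "\<forall>p\<in>S. 0 < f p \<and> 0 < g p"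
  shows "continuous_on S (\<lambda>p. profile_ww k (f p) (g p))"
proof -
  have "\<forall>p\<in>S. 0 < (f p)\<^sup>2 + g p" using assms(3) by (simp add: add_nonneg_pos)
  then show ?thesis unfolding profile_ww_def using assms by (intro continuous_intros) auto
qed

lemma continuous_on_profile_t:
  assumes "continuous_on S f" "continuous_on S g" "\<forall>p\<in>S. 0 < f p \<and> 0 < g p"
  shows "continuous_on S (\<lambda>p. profile_t k (f p) (g p))"
proof -
  have "\<forall>p\<in>S. 0 < (f p)\<^sup>2 + g p" using assms(3) by (simp add: add_nonneg_pos)
  then show ?thesis unfolding profile_t_def using assms by (intro continuous_intros) auto
qed

lemma power2_powr: "0 < (w::real) \<Longrightarrow> (w\<^sup>2) powr a = w powr (2*a)"
  using powr_powr[of w 2 a] by simp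

lemma powr_add_le_add_powr:
  fixes a b p :: real
  assumes "0 \<le> a" "0 \<le> b" "0 < p" "p \<le> 1"
  shows "(a + b) powr p \<le> a powr p + b powr p"
proof (cases "a + b = 0")
  case True
  then show ?thesis using assms by simp
next
  case False
  then have ab: "0 < a + b" using assms by simp
  have frac: "(a + b) powr p * (c / (a + b)) \<le> c powr p" if "0 \<le> c" "c \<le> a + b" for c
  proof -
    have "c / (a + b) \<le> (c / (a + b)) powr p"
      using that ab assms powr_mono'[of p 1 "c / (a + b)"] by simp
    then have "(a + b) powr p * (c / (a + b)) \<le> (a + b) powr p * (c / (a + b)) powr p"
      by (intro mult_left_mono) auto
    also have "\<dots> = c powr p" using ab that by (simp add: powr_divide)
    finally show ?thesis .
  qed
  have "(a + b) powr p = (a + b) powr p * (a / (a + b)) + (a + b) powr p * (b / (a + b))"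
    using ab by (simp add: add_divide_distrib[symmetric] distrib_left[symmetric])
  also have "\<dots> \<le> a powr p + b powr p"
    using frac[of a] frac[of b] assms by (intro add_mono) auto
  finally show ?thesis .
qed

lemma profile_bounds:
  assumes "1 \<le> k" "k \<le> 2" "0 < w" "w \<le> 1" "0 \<le> s"
  shows "2*(A - 1)*w \<le> profile k A w s" "profile k A w s \<le> 2*A*w"
proof -
  have "(w\<^sup>2 + s) powr (k/2) \<le> (w\<^sup>2) powr (k/2) + s powr (k/2)"
    using assms by (intro powr_add_le_add_powr) auto
  moreover have "(w\<^sup>2) powr (k/2) = w powr k" using assms power2_powr[of w "k/2"] by simp
  moreover have "w powr k \<le> w" using assms powr_mono'[of 1 k w] by simp
  moreover have "s powr (k/2) \<le> (w\<^sup>2 + s) powr (k/2)" using assms by (intro powr_mono2) auto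
  ultimately show "2*(A - 1)*w \<le> profile k A w s" "profile k A w s \<le> 2*A*w"
    unfolding profile_def by (auto simp: algebra_simps)
qed

lemma profile_w_ge:
  assumes "1 < k" "k < 2" "0 < w" "w \<le> 1" "0 \<le> s"
  shows "2*A - 2*k \<le> profile_w k A w s"
proof -
  have wk: "w powr (k - 1) \<le> 1" using assms powr_mono2[of "k - 1" w 1] by simp
  have "(w\<^sup>2 + s) powr (k/2 - 1) \<le> (w\<^sup>2) powr (k/2 - 1)"
    using assms by (intro powr_mono2') auto
  also have "\<dots> = w powr (k - 2)" using assms by (simp add: power2_powr algebra_simps)
  finally have "w * (w\<^sup>2 + s) powr (k/2 - 1) \<le> w * w powr (k - 2)" using assms by simp
  also have "\<dots> = w powr (k - 1)" using assms powr_mult_base[of w "k - 2"] by simp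
  finally have "k * (w * (w\<^sup>2 + s) powr (k/2 - 1)) \<le> k" using wk assms by (simp add: mult_left_le)
  moreover have "k * w powr (k - 1) \<le> k" using wk assms by (simp add: mult_left_le)
  ultimately show ?thesis unfolding profile_w_def by (simp add: algebra_simps)
qed

lemma profile_t_nonpos:
  assumes "1 < k" "k < 2" "0 < s"
  shows "profile_t k w s \<le> 0"
proof -
  have "(w\<^sup>2 + s) powr (k/2 - 1) \<le> s powr (k/2 - 1)"
    using assms by (intro powr_mono2') auto
  then show ?thesis unfolding profile_t_def using assms by (simp add: mult_nonneg_nonpos)
qed

definition barrier_rate :: "real \<Rightarrow> real \<Rightarrow> real" where
  "barrier_rate k \<delta> =
     min (min \<delta> (2*\<delta>*k*(k - 1))) (min ((k/2)*(1 - 2 powr (k/2 - 1))) (2*\<delta>*k*2 powr (k/2 - 2)))"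

lemma barrier_rate_pos:
  assumes "1 < k" "k < 2" "0 < \<delta>"
  shows "0 < barrier_rate k \<delta>"
proof -
  have "(2::real) powr (k/2 - 1) < 2 powr 0" using assms by (intro powr_less_mono) auto
  then show ?thesis using assms by (simp add: barrier_rate_def)
qed

lemma w_blowup_absorbed:
  fixes k \<delta> w c :: real
  assumes "1 < k" "k < 2" "0 < \<delta>" "0 < w" "w \<le> 1" "c \<le> \<delta>" "c \<le> 2*\<delta>*k*(k - 1)"
  shows "c * w powr (k - 2) \<le> 2*\<delta> + 4*\<delta>*(1 - w)*k*(k - 1) * w powr (k - 2)"
proof (cases "w \<le> 1/2")
  case True
  have "2 * (\<delta>*k*(k - 1)) \<le> (4*(1 - w)) * (\<delta>*k*(k - 1))"
    using True assms by (intro mult_right_mono) auto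
  then have "c \<le> 4*\<delta>*(1 - w)*k*(k - 1)" using assms by (simp add: algebra_simps)
  then have "c * w powr (k - 2) \<le> 4*\<delta>*(1 - w)*k*(k - 1) * w powr (k - 2)"
    by (intro mult_right_mono) auto
  then show ?thesis using assms(3) by linarith
next
  case False
  then have "w powr (k - 2) \<le> (1/2) powr (k - 2)" using assms by (intro powr_mono2') auto
  also have "(1/2::real) powr (k - 2) = 2 powr (2 - k)" by (simp add: powr_divide powr_minus_divide[symmetric])
  also have "\<dots> \<le> 2 powr 1" using assms by (intro powr_mono) auto
  finally have "c * w powr (k - 2) \<le> \<delta> * 2"
    using assms by (intro mult_mono) auto
  moreover have "0 \<le> 4*\<delta>*(1 - w)*k*(k - 1) * w powr (k - 2)" using assms by simp
  ultimately show ?thesis by linarith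
qed

lemma s_blowup_absorbed:
  fixes k \<delta> w s c :: real
  assumes "1 < k" "k < 2" "0 < \<delta>" "0 < w" "w \<le> 1" "0 < s"
    and "c \<le> \<delta>" "c \<le> (k/2)*(1 - 2 powr (k/2 - 1))" "c \<le> 2*\<delta>*k*2 powr (k/2 - 2)"
  shows "c * s powr (k/2 - 1)
    \<le> 2*\<delta> + 4*\<delta>*(1 - w)*k*((w\<^sup>2 + s) powr (k/2 - 2) * ((k - 1)*w\<^sup>2 + s)) - profile_t k w s"
proof -
  define P where "P = w\<^sup>2 + s"
  define S where "S = s powr (k/2 - 1)"
  define PQ where "PQ = P powr (k/2 - 2) * ((k - 1)*w\<^sup>2 + s)"
  have PQ: "0 \<le> 4*\<delta>*(1 - w)*k*PQ" using assms by (simp add: PQ_def)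
  have Ft: "profile_t k w s \<le> 0" using assms(1,2,6) by (rule profile_t_nonpos)
  consider "s \<le> w\<^sup>2" | "w\<^sup>2 < s" "w \<le> 1/2" | "w\<^sup>2 < s" "1/2 < w" by linarith
  then have "c * S \<le> 2*\<delta> + 4*\<delta>*(1 - w)*k*PQ - profile_t k w s"
  proof cases
    case 1
    \<comment> \<open>Away from the lateral boundary in parabolic scale, the time derivative alone suffices.\<close>
    then have "P powr (k/2 - 1) \<le> (2 * s) powr (k/2 - 1)"
      using assms by (intro powr_mono2') (auto simp: P_def)
    also have "\<dots> = 2 powr (k/2 - 1) * S" by (simp add: S_def powr_mult)
    finally have "profile_t k w s \<le> - ((k/2)*(1 - 2 powr (k/2 - 1))) * S"
      unfolding profile_t_def using assms by (simp add: P_def S_def algebra_simps)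
    also have "\<dots> \<le> - c * S" using assms by (intro mult_right_mono) (auto simp: S_def)
    finally show ?thesis using PQ assms by linarith
  next
    case 2
    then have "(2 * s) powr (k/2 - 2) \<le> P powr (k/2 - 2)"
      using assms by (intro powr_mono2') (auto simp: P_def add_pos_pos)
    then have "(2 * s) powr (k/2 - 2) * s \<le> PQ"
      unfolding PQ_def using assms by (intro mult_mono) auto
    moreover have "(2 * s) powr (k/2 - 2) * s = 2 powr (k/2 - 2) * S"
      using assms powr_add[of s "k/2 - 2" 1] by (simp add: S_def powr_mult)
    ultimately have pq: "2 powr (k/2 - 2) * S \<le> PQ" by simp
    have "c * S \<le> (2*\<delta>*k*2 powr (k/2 - 2)) * S"
      using assms by (intro mult_right_mono) (auto simp: S_def)
    also have "\<dots> = (2*\<delta>*k) * (2 powr (k/2 - 2) * S)" by simp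
    also have "\<dots> \<le> (2*\<delta>*k) * PQ" using pq assms by (intro mult_left_mono) auto
    also have "\<dots> \<le> 4*\<delta>*(1 - w)*k*PQ"
      using 2 assms by (intro mult_right_mono) (auto simp: PQ_def P_def)
    finally show ?thesis using Ft assms by linarith
  next
    case 3
    then have "(1/2::real)\<^sup>2 < w\<^sup>2" by (intro power_strict_mono) auto
    then have "1/4 < s" using 3 by (simp add: power2_eq_square)
    then have "S \<le> (1/4) powr (k/2 - 1)" unfolding S_def using assms by (intro powr_mono2') auto
    also have "(1/4::real) powr (k/2 - 1) = 4 powr (1 - k/2)"
      by (simp add: powr_divide powr_minus_divide[symmetric])
    also have "\<dots> \<le> 4 powr (1/2)" using assms by (intro powr_mono) auto
    also have "(4::real) powr (1/2) = 2" by (simp add: powr_half_sqrt)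
    finally have "c * S \<le> \<delta> * 2" using assms by (intro mult_mono) (auto simp: S_def)
    then show ?thesis using PQ Ft by linarith
  qed
  then show ?thesis by (simp add: S_def PQ_def P_def)
qed

lemma profile_operator_le:
  assumes "1 < k" "k < 2" "0 < \<delta>" "0 < w" "w \<le> 1" "0 < s" "\<delta> \<le> T" "\<delta> * (1 - w) \<le> X"
  shows "profile_t k w s - 2 * profile_w k (k + 1) w s * T + 4 * profile_ww k w s * X
    \<le> - barrier_rate k \<delta> * (w powr (k - 2) + s powr (k/2 - 1))"
proof -
  define c where "c = barrier_rate k \<delta>"
  define W where "W = w powr (k - 2)"
  define PQ where "PQ = (w\<^sup>2 + s) powr (k/2 - 2) * ((k - 1)*w\<^sup>2 + s)"
  have Fww: "profile_ww k w s = - k * PQ - k*(k - 1)*W"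
    by (simp add: profile_ww_def PQ_def W_def)
  have "0 \<le> k * PQ" "0 \<le> k*(k - 1)*W" using assms by (simp_all add: PQ_def W_def)
  then have "profile_ww k w s \<le> 0" using Fww by linarith
  then have "4 * profile_ww k w s * X \<le> 4 * profile_ww k w s * (\<delta> * (1 - w))"
    using assms by (simp add: mult_left_mono_neg)
  also have "\<dots> = - 4*\<delta>*(1 - w)*k*PQ - 4*\<delta>*(1 - w)*k*(k - 1)*W"
    by (simp add: Fww algebra_simps)
  finally have ww: "4 * profile_ww k w s * X \<le> \<dots>" .
  have "2 \<le> profile_w k (k + 1) w s" using profile_w_ge[of k w s "k + 1"] assms by simp
  then have "2 * \<delta> \<le> profile_w k (k + 1) w s * T"
    using assms mult_mono[of 2 "profile_w k (k + 1) w s" \<delta> T] by (simp add: mult.commute)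
  moreover have "c * W \<le> 2*\<delta> + 4*\<delta>*(1 - w)*k*(k - 1) * W"
    unfolding W_def c_def using assms by (intro w_blowup_absorbed) (auto simp: barrier_rate_def)
  moreover have "c * s powr (k/2 - 1) \<le> 2*\<delta> + 4*\<delta>*(1 - w)*k*PQ - profile_t k w s"
    unfolding PQ_def c_def using assms by (intro s_blowup_absorbed) (auto simp: barrier_rate_def)
  ultimately show ?thesis using ww by (simp add: c_def W_def algebra_simps)
qed

lemma parabolic_dist_powr_le:
  fixes r s k :: real
  assumes "1 < k" "k < 2" "0 \<le> r" "r < 1" "0 < s"
  shows "(min (1 - r) (sqrt s)) powr (k - 2) \<le> 2 * ((1 - r\<^sup>2) powr (k - 2) + s powr (k/2 - 1))"
proof (cases "1 - r \<le> sqrt s")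
  case True
  have "1 - r\<^sup>2 = (1 - r) * (1 + r)" by (simp add: algebra_simps power2_eq_square)
  then have w: "0 < 1 - r\<^sup>2" "1 - r\<^sup>2 \<le> 2 * (1 - r)"
    using assms mult_left_mono[of "1 + r" 2 "1 - r"] by (auto simp: mult.commute)
  have "(1 - r) powr (k - 2) \<le> ((1 - r\<^sup>2) / 2) powr (k - 2)"
    using w assms by (intro powr_mono2') auto
  also have "\<dots> = (1 - r\<^sup>2) powr (k - 2) * (1 / 2 powr (k - 2))"
    using w by (simp add: powr_divide)
  also have "1 / 2 powr (k - 2) = (2::real) powr (2 - k)"
    using powr_minus_divide[of 2 "k - 2"] by simp
  also have "(1 - r\<^sup>2) powr (k - 2) * 2 powr (2 - k) \<le> (1 - r\<^sup>2) powr (k - 2) * 2 powr 1"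
    using assms by (intro mult_left_mono powr_mono) auto
  finally have "(1 - r) powr (k - 2) \<le> 2 * (1 - r\<^sup>2) powr (k - 2)" by simp
  then show ?thesis using True by (simp add: min_absorb1 add_increasing2)
next
  case False
  have "sqrt s powr (k - 2) = (s powr (1/2)) powr (k - 2)" using assms by (simp add: powr_half_sqrt)
  also have "\<dots> = s powr (k/2 - 1)" by (simp add: powr_powr diff_divide_distrib)
  finally show ?thesis using False by simp
qed

definition id_plus_outer :: "real \<Rightarrow> real \<Rightarrow> real^'n \<Rightarrow> real^'n^'n" where
  "id_plus_outer \<alpha> \<beta> x = (\<chi> i j. \<alpha> * of_bool (i = j) + \<beta> * x $ i * x $ j)"

lemma id_plus_outer_mult_vec:
  "id_plus_outer \<alpha> \<beta> x *v h = \<alpha> *\<^sub>R h + (\<beta> * (x \<bullet> h)) *\<^sub>R x"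
  by (simp add: vec_eq_iff id_plus_outer_def matrix_vector_mult_def inner_vec_def
      distrib_left sum.distrib sum_distrib_left mult_ac of_bool_def if_distrib[of "times _"] cong: if_cong)

lemma sum_entries_mult_id_plus_outer:
  fixes a :: "real^'n^'n"
  shows "(\<Sum>i\<in>UNIV. \<Sum>j\<in>UNIV. a $ i $ j * id_plus_outer \<alpha> \<beta> x $ i $ j)
     = \<alpha> * trace a + \<beta> * (x \<bullet> (a *v x))"
  by (simp add: id_plus_outer_def trace_def inner_vec_def matrix_vector_mult_def
      distrib_left sum.distrib sum_distrib_left mult_ac of_bool_def if_distrib[of "times _"] cong: if_cong)

lemma Sdelta_trace_ge:
  fixes a :: "real^'n^'n"
  assumes "a \<in> Sdelta \<delta>"
  shows "\<delta> * CARD('n) \<le> trace a"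
proof -
  have "\<delta> \<le> a $ i $ i" for i
  proof -
    have "\<delta> * (norm (axis i (1::real)))\<^sup>2 \<le> axis i 1 \<bullet> (a *v axis i 1)"
      using assms unfolding Sdelta_def by blast
    then show ?thesis by (simp add: inner_axis' matrix_vector_mult_basis column_def)
  qed
  then have "(\<Sum>i\<in>(UNIV::'n set). \<delta>) \<le> trace a" unfolding trace_def by (intro sum_mono) auto
  then show ?thesis by (simp add: mult.commute)
qed

lemma Sdelta_quadratic_ge:
  fixes a :: "real^'n^'n"
  assumes "a \<in> Sdelta \<delta>"
  shows "\<delta> * (x \<bullet> x) \<le> x \<bullet> (a *v x)"
  using assms unfolding Sdelta_def by (auto simp: power2_norm_eq_inner)

definition barrier :: "real \<Rightarrow> real \<Rightarrow> real \<Rightarrow> real^'n \<Rightarrow> real" where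
  "barrier k K t x = K * profile k (k + 1) (1 - x \<bullet> x) (1 - t)"

definition barrier_t :: "real \<Rightarrow> real \<Rightarrow> real \<Rightarrow> real^'n \<Rightarrow> real" where
  "barrier_t k K t x = K * profile_t k (1 - x \<bullet> x) (1 - t)"

definition barrier_grad :: "real \<Rightarrow> real \<Rightarrow> real \<Rightarrow> real^'n \<Rightarrow> real^'n" where
  "barrier_grad k K t x = (-2 * K * profile_w k (k + 1) (1 - x \<bullet> x) (1 - t)) *\<^sub>R x"

definition barrier_hess :: "real \<Rightarrow> real \<Rightarrow> real \<Rightarrow> real^'n \<Rightarrow> real^'n^'n" where
  "barrier_hess k K t x =
     id_plus_outer (-2 * K * profile_w k (k + 1) (1 - x \<bullet> x) (1 - t))
       (4 * K * profile_ww k (1 - x \<bullet> x) (1 - t)) x"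

lemma C1_memD:
  fixes x :: "real^'n"
  assumes "(t, x) \<in> C1"
  shows "0 \<le> t" "t < 1" "norm x < 1" "x \<bullet> x < 1"
proof -
  show "0 \<le> t" "t < 1" "norm x < 1" using assms by (auto simp: C1_def)
  then show "x \<bullet> x < 1" by (simp add: dot_square_norm power_less_one_iff)
qed

lemma C1bar_memD:
  fixes x :: "real^'n"
  assumes "(t, x) \<in> C1bar"
  shows "t \<le> 1" "x \<bullet> x \<le> 1"
proof -
  show "t \<le> 1" using assms by (auto simp: C1bar_def)
  have "norm x \<le> 1" using assms by (auto simp: C1bar_def)
  then show "x \<bullet> x \<le> 1" by (simp add: dot_square_norm power_le_one)
qed

lemma has_derivative_one_minus_inner_self:
  "((\<lambda>y. 1 - y \<bullet> y) has_derivative (\<lambda>h. -2 * (x \<bullet> h))) (at x)"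
  by (auto intro!: derivative_eq_intros simp: fun_eq_iff inner_commute)

lemma has_real_derivative_barrier_t:
  assumes "x \<bullet> x < 1" "t < 1"
  shows "((\<lambda>s. barrier k K s x) has_real_derivative barrier_t k K t x) (at t)"
  unfolding barrier_def barrier_t_def
  using assms by (intro DERIV_cmult has_real_derivative_profile_t) auto

lemma has_derivative_barrier:
  assumes "x \<bullet> x < 1" "t \<le> 1"
  shows "((\<lambda>y. barrier k K t y) has_derivative (\<lambda>h. barrier_grad k K t x \<bullet> h)) (at x)"
proof -
  have pos: "0 < 1 - x \<bullet> x" "0 \<le> 1 - t" using assms by auto
  have "((\<lambda>y. profile k (k + 1) (1 - y \<bullet> y) (1 - t)) has_derivative
      (\<lambda>h. -2 * (x \<bullet> h) * profile_w k (k + 1) (1 - x \<bullet> x) (1 - t))) (at x)"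
    using DERIV_compose_FDERIV[OF has_real_derivative_profile_w[OF pos]
        has_derivative_one_minus_inner_self] by simp
  then show ?thesis unfolding barrier_def barrier_grad_def
    by (rule has_derivative_eq_rhs[OF has_derivative_mult_right]) (auto simp: fun_eq_iff)
qed

lemma has_derivative_barrier_grad:
  assumes "x \<bullet> x < 1" "t \<le> 1"
  shows "((\<lambda>y. barrier_grad k K t y) has_derivative (\<lambda>h. barrier_hess k K t x *v h)) (at x)"
proof -
  have pos: "0 < 1 - x \<bullet> x" "0 \<le> 1 - t" using assms by auto
  have "((\<lambda>y. -2 * K * profile_w k (k + 1) (1 - y \<bullet> y) (1 - t)) has_derivative
      (\<lambda>h. -2 * K * (-2 * (x \<bullet> h) * profile_ww k (1 - x \<bullet> x) (1 - t)))) (at x)"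
    using DERIV_compose_FDERIV[OF has_real_derivative_profile_ww[OF pos]
        has_derivative_one_minus_inner_self] by (intro has_derivative_mult_right) simp
  from has_derivative_scaleR[OF this has_derivative_ident]
  show ?thesis unfolding barrier_grad_def barrier_hess_def
    by (rule has_derivative_eq_rhs) (auto simp: fun_eq_iff id_plus_outer_mult_vec algebra_simps)
qed

lemma C12_derivs_barrier:
  "C12_derivs (barrier k K) (barrier_t k K) (barrier_grad k K) (barrier_hess k K)"
  unfolding C12_derivs_def
proof (intro conjI)
  show "\<forall>(t, x)\<in>C1. ((\<lambda>s. barrier k K s x) has_real_derivative barrier_t k K t x) (at t within {0..<1})"
  proof clarify
    fix t and x :: "real^'n"
    assume "(t, x) \<in> C1"
    then have "x \<bullet> x < 1" "t < 1" by (simp_all add: C1_memD)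
    then show "((\<lambda>s. barrier k K s x) has_real_derivative barrier_t k K t x) (at t within {0..<1})"
      by (rule has_field_derivative_at_within[OF has_real_derivative_barrier_t])
  qed
  show "\<forall>(t, x)\<in>C1. ((\<lambda>y. barrier k K t y) has_derivative (\<lambda>h. barrier_grad k K t x \<bullet> h)) (at x)"
  proof clarify
    fix t and x :: "real^'n"
    assume "(t, x) \<in> C1"
    then have "x \<bullet> x < 1" "t \<le> 1" by (simp_all add: C1_memD less_imp_le)
    then show "((\<lambda>y. barrier k K t y) has_derivative (\<lambda>h. barrier_grad k K t x \<bullet> h)) (at x)"
      by (rule has_derivative_barrier)
  qed
  show "\<forall>(t, x)\<in>C1. ((\<lambda>y. barrier_grad k K t y) has_derivative (\<lambda>h. barrier_hess k K t x *v h)) (at x)"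
  proof clarify
    fix t and x :: "real^'n"
    assume "(t, x) \<in> C1"
    then have "x \<bullet> x < 1" "t \<le> 1" by (simp_all add: C1_memD less_imp_le)
    then show "((\<lambda>y. barrier_grad k K t y) has_derivative (\<lambda>h. barrier_hess k K t x *v h)) (at x)"
      by (rule has_derivative_barrier_grad)
  qed
next
  let ?w = "\<lambda>p::real \<times> (real^'n). 1 - snd p \<bullet> snd p" and ?s = "\<lambda>p::real \<times> (real^'n). 1 - fst p"
  have w: "continuous_on C1 ?w" and s: "continuous_on C1 ?s"
    by (intro continuous_intros)+
  have pos: "\<forall>p\<in>C1. 0 < ?w p \<and> 0 < ?s p"
    using C1_memD by fastforce
  note Ft = continuous_on_profile_t[OF w s pos]
    and Fw = continuous_on_profile_w[OF w s pos]
    and Fww = continuous_on_profile_ww[OF w s pos]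
  show "continuous_on C1 (\<lambda>(t, x). barrier_t k K t x)"
    unfolding barrier_t_def split_def by (intro continuous_on_mult continuous_on_const Ft)
  show "continuous_on C1 (\<lambda>(t, x). barrier_grad k K t x)"
    unfolding barrier_grad_def split_def
    by (intro continuous_on_scaleR continuous_on_mult continuous_on_const Fw continuous_on_snd
        continuous_on_id)
  show "continuous_on C1 (\<lambda>(t, x). barrier_hess k K t x)"
    unfolding barrier_hess_def id_plus_outer_def split_def
    by (intro continuous_on_vec_lambda continuous_on_add continuous_on_mult continuous_on_const
        Fw Fww continuous_on_component continuous_on_snd continuous_on_id)
qed

lemma continuous_on_barrier:
  assumes "0 < k"
  shows "continuous_on C1bar (\<lambda>(t, x). barrier k K t x)"
  unfolding barrier_def split_def using C1bar_memD assms
  by (intro continuous_intros continuous_on_profile) fastforce+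

lemma barrier_bounds:
  assumes "1 \<le> k" "k \<le> 2" "0 \<le> K" "(t, x) \<in> C1"
  shows "0 \<le> barrier k K t x" "barrier k K t x \<le> 4 * K * (k + 1) * (1 - norm x)"
proof -
  note tx = C1_memD[OF assms(4)]
  define w where "w = 1 - x \<bullet> x"
  have w: "0 < w" "w \<le> 1" using tx by (auto simp: w_def)
  have "w = (1 - norm x) * (1 + norm x)"
    by (simp add: w_def dot_square_norm algebra_simps power2_eq_square)
  also have "\<dots> \<le> (1 - norm x) * 2" using tx by (intro mult_left_mono) auto
  finally have w_norm: "w \<le> 2 * (1 - norm x)" by simp
  have F: "2 * k * w \<le> profile k (k + 1) w (1 - t)" "profile k (k + 1) w (1 - t) \<le> 2 * (k + 1) * w"
    using profile_bounds[of k w "1 - t" "k + 1"] assms w tx by auto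
  have "0 \<le> 2 * k * w" using assms w by simp
  with F show "0 \<le> barrier k K t x"
    unfolding barrier_def w_def using assms by simp
  have "barrier k K t x \<le> K * (2 * (k + 1) * w)"
    unfolding barrier_def w_def[symmetric] using F assms by (intro mult_left_mono) auto
  also have "\<dots> \<le> K * (2 * (k + 1) * (2 * (1 - norm x)))"
    using w_norm assms by (intro mult_left_mono) auto
  finally show "barrier k K t x \<le> 4 * K * (k + 1) * (1 - norm x)" by (simp add: algebra_simps)
qed

lemma barrier_operator_le:
  fixes a :: "real^'n^'n"
  assumes "1 < k" "k < 2" "0 < \<delta>" "0 \<le> K" "(t, x) \<in> C1" "a \<in> Sdelta \<delta>"
  shows "barrier_t k K t x + (\<Sum>i\<in>UNIV. \<Sum>j\<in>UNIV. a $ i $ j * barrier_hess k K t x $ i $ j)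
    \<le> - K * barrier_rate k \<delta> * ((1 - x \<bullet> x) powr (k - 2) + (1 - t) powr (k/2 - 1))"
proof -
  note tx = C1_memD[OF assms(5)]
  have "\<delta> \<le> \<delta> * CARD('n)" using assms by simp
  then have T: "\<delta> \<le> trace a" using Sdelta_trace_ge[OF assms(6)] by linarith
  have X: "\<delta> * (1 - (1 - x \<bullet> x)) \<le> x \<bullet> (a *v x)" using Sdelta_quadratic_ge[OF assms(6)] by simp
  have "barrier_t k K t x + (\<Sum>i\<in>UNIV. \<Sum>j\<in>UNIV. a $ i $ j * barrier_hess k K t x $ i $ j)
    = K * (profile_t k (1 - x \<bullet> x) (1 - t) - 2 * profile_w k (k + 1) (1 - x \<bullet> x) (1 - t) * trace a
           + 4 * profile_ww k (1 - x \<bullet> x) (1 - t) * (x \<bullet> (a *v x)))"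
    unfolding barrier_t_def barrier_hess_def sum_entries_mult_id_plus_outer by (simp add: algebra_simps)
  also have "\<dots> \<le> K * (- barrier_rate k \<delta> * ((1 - x \<bullet> x) powr (k - 2) + (1 - t) powr (k/2 - 1)))"
    using assms tx T X by (intro mult_left_mono profile_operator_le) auto
  finally show ?thesis by simp
qed

theorem lemma3p3:
  fixes \<kappa> \<delta> :: real
  assumes "1 < \<kappa>" "\<kappa> < 2" "0 < \<delta>" "\<delta> \<le> 1"
  shows "\<exists>(\<Phi> :: real \<Rightarrow> real^'n \<Rightarrow> real) \<Phi>t D\<Phi> D2\<Phi> (N::real).
     continuous_on (C1bar :: (real \<times> (real^'n)) set) (\<lambda>(t, x). \<Phi> t x) \<and>
     C12_derivs \<Phi> \<Phi>t D\<Phi> D2\<Phi> \<and>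
     (\<forall>(t, x)\<in>(C1 :: (real \<times> (real^'n)) set). \<forall>a\<in>Sdelta \<delta>.
        \<Phi>t t x + (\<Sum>i\<in>UNIV. \<Sum>j\<in>UNIV. a $ i $ j * D2\<Phi> t x $ i $ j)
          \<le> - ((min (1 - norm x) (sqrt (1 - t))) powr (\<kappa> - 2))) \<and>
     (\<forall>(t, x)\<in>(C1 :: (real \<times> (real^'n)) set). 0 \<le> \<Phi> t x \<and> \<Phi> t x \<le> N * (1 - norm x))"
proof -
  define K where "K = 2 / barrier_rate \<kappa> \<delta>"
  have rate: "0 < barrier_rate \<kappa> \<delta>" using assms by (intro barrier_rate_pos)
  then have K: "0 < K" "K * barrier_rate \<kappa> \<delta> = 2" by (simp_all add: K_def)
  have "barrier_t \<kappa> K t x + (\<Sum>i\<in>UNIV. \<Sum>j\<in>UNIV. a $ i $ j * barrier_hess \<kappa> K t x $ i $ j)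
      \<le> - ((min (1 - norm x) (sqrt (1 - t))) powr (\<kappa> - 2))"
    if tx: "(t, x) \<in> C1" and a: "a \<in> Sdelta \<delta>" for t x a
  proof -
    note bounds = C1_memD[OF tx]
    have "barrier_t \<kappa> K t x + (\<Sum>i\<in>UNIV. \<Sum>j\<in>UNIV. a $ i $ j * barrier_hess \<kappa> K t x $ i $ j)
        \<le> - 2 * ((1 - (norm x)\<^sup>2) powr (\<kappa> - 2) + (1 - t) powr (\<kappa>/2 - 1))"
      using barrier_operator_le[OF assms(1-3) less_imp_le[OF K(1)] tx a]
      by (simp add: K(2) dot_square_norm)
    also have "\<dots> \<le> - ((min (1 - norm x) (sqrt (1 - t))) powr (\<kappa> - 2))"
      using parabolic_dist_powr_le[of \<kappa> "norm x" "1 - t"] assms bounds by simp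
    finally show ?thesis .
  qed
  then show ?thesis
    using continuous_on_barrier[of \<kappa> K] C12_derivs_barrier[of \<kappa> K] barrier_bounds[of \<kappa> K] assms K
    by (intro exI[of _ "barrier \<kappa> K"] exI[of _ "barrier_t \<kappa> K"] exI[of _ "barrier_grad \<kappa> K"]
        exI[of _ "barrier_hess \<kappa> K"] exI[of _ "4 * K * (\<kappa> + 1)"]) auto
qed

end
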